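(* Let $r,s,t,u,v$ be non-negative integers with $r+s\ge 1$ and $u+v=4t-2r+4$. Let $G=(r,\,r+s-1,\,t,\,t,\,s+t,\,u)$ and $H=(r,\,r+s-1,\,t,\,t,\,s+t,\,v)$, with interesting factors $g(x)$ and $h(x)$ respectively. Then $$g(x)=-h(-x+2s+6t+4).$$
   Context: All graphs are finite and simple. For integers $1\le j\le k$, a $(j,k)$-biclique is a graph whose vertex set is the disjoint union of a $j$-clique and a $k$-clique, with an arbitrary set of additional edges each joining a vertex of the $j$-clique to a vertex of the $k$-clique. For non-negative integers $a,b,c,d,e,f$, the notation $(a,b,c,d,e,f)$ denotes the $(3,k)$-biclique with $k=a+b+c+d+e+f$, whose $3$-clique is $\{v_1,v_2,v_3\}$, in which every vertex of the $k$-clique is adjacent to exactly one or exactly two of $v_1,v_2,v_3$, and exactly $a$ (resp. $b$, $c$) vertices of the $k$-clique are adjacent to $v_1$ only (resp. $v_2$ only, $v_3$ only), and exactly $d$ (resp. $e$, $f$) vertices of the $k$-clique are adjacent to exactly $v_2$ and $v_3$ (resp. exactly $v_1$ and $v_3$, exactly $v_1$ and $v_2$). This determines the graph up to isomorphism. The interesting factor of a $(3,k)$-biclique $G$ is the cubic polynomial $P_G(x)/(x)_k$, where $P_G$ is the chromatic polynomial and $(x)_k=x(x-1)\cdots(x-k+1)$. *)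

theory Defs
  imports "HOL-Library.FuncSet" "HOL-Computational_Algebra.Polynomial"
begin

text \<open>A finite simple graph is given by a finite vertex set V and a symmetric,
irreflexive adjacency relation adj.\<close>

definition num_colorings :: "nat set \<Rightarrow> (nat \<Rightarrow> nat \<Rightarrow> bool) \<Rightarrow> nat \<Rightarrow> nat" where
  "num_colorings V adj n =
     card {c \<in> V \<rightarrow>\<^sub>E {0..<n}. \<forall>x\<in>V. \<forall>y\<in>V. adj x y \<longrightarrow> c x \<noteq> c y}"

definition chrom_poly :: "nat set \<Rightarrow> (nat \<Rightarrow> nat \<Rightarrow> bool) \<Rightarrow> real poly" where
  "chrom_poly V adj = (THE p. \<forall>n::nat. poly p (real n) = real (num_colorings V adj n))"

definition falling_poly :: "nat \<Rightarrow> real poly" where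
  "falling_poly k = (\<Prod>i<k. [:- real i, 1:])"

text \<open>Vertices 0,1,2 are
v1,v2,v3 (the 3-clique); vertices 3..k+2 form the k-clique. The clique vertex 3+i
is adjacent to the following subset of {0,1,2}: the first a to {v1}, the next b to
{v2}, the next c to {v3}, the next d to {v2,v3}, the next e to {v1,v3}, the last f
to {v1,v2}.\<close>

definition bic_nbrs :: "nat \<Rightarrow> nat \<Rightarrow> nat \<Rightarrow> nat \<Rightarrow> nat \<Rightarrow> nat \<Rightarrow> nat \<Rightarrow> nat set" where
  "bic_nbrs a b c d e f i =
     (if i < a then {0}
      else if i < a+b then {1}
      else if i < a+b+c then {2}
      else if i < a+b+c+d then {1,2}
      else if i < a+b+c+d+e then {0,2}
      else {0,1})"

definition bic_verts :: "nat \<Rightarrow> nat \<Rightarrow> nat \<Rightarrow> nat \<Rightarrow> nat \<Rightarrow> nat \<Rightarrow> nat set" where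
  "bic_verts a b c d e f = {0..<a+b+c+d+e+f+3}"

definition bic_adj :: "nat \<Rightarrow> nat \<Rightarrow> nat \<Rightarrow> nat \<Rightarrow> nat \<Rightarrow> nat \<Rightarrow> nat \<Rightarrow> nat \<Rightarrow> bool" where
  "bic_adj a b c d e f x y =
     (x \<noteq> y \<and>
      ((x < 3 \<and> y < 3) \<or> (3 \<le> x \<and> 3 \<le> y) \<or>
       (x < 3 \<and> 3 \<le> y \<and> x \<in> bic_nbrs a b c d e f (y - 3)) \<or>
       (y < 3 \<and> 3 \<le> x \<and> y \<in> bic_nbrs a b c d e f (x - 3))))"

definition interesting_factor :: "nat \<Rightarrow> nat \<Rightarrow> nat \<Rightarrow> nat \<Rightarrow> nat \<Rightarrow> nat \<Rightarrow> real poly" where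
  "interesting_factor a b c d e f =
     chrom_poly (bic_verts a b c d e f) (bic_adj a b c d e f)
       div falling_poly (a+b+c+d+e+f)"

end

theory Submission imports Defs begin

text \<open>
  Let G = (a,b,c,d,e,f) be a (3,k)-biclique, k = a+b+c+d+e+f, with triangle v1,v2,v3
  and clique K.  A proper n-colouring of G is an injective colouring of K followed by
  a choice of three pairwise distinct colours for v1,v2,v3, where vj must avoid the
  colours of its neighbours in K.  Once K is coloured, the set of colours avoided by
  vj is a fixed set whose size depends only on the neighbourhood of vj, and
  inclusion-exclusion over the three coincidences p=q, p=w, q=w counts the admissible
  triples.  Hence P_G(n) = (n)_k * g(n) for an explicit cubic g (bic_cubic), and
  since a polynomial is determined by its values at the naturals, the interesting
  factor of G is exactly g.

  The
  main theorem is then a polynomial identity between two explicit cubics.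
\<close>

section \<open>Counting triples of pairwise distinct elements\<close>

definition distinct_triples :: "'a set \<Rightarrow> 'a set \<Rightarrow> 'a set \<Rightarrow> ('a \<times> 'a \<times> 'a) set" where
  "distinct_triples A B C = {(p,q,w). p \<in> A \<and> q \<in> B \<and> w \<in> C \<and> p \<noteq> q \<and> p \<noteq> w \<and> q \<noteq> w}"

text \<open>Pairs (q,w) in B \<times> C with q \<noteq> w: remove the diagonal, which is indexed by B \<inter> C.\<close>
lemma card_distinct_pairs:
  assumes "finite B" "finite C"
  shows "int (card {(q,w). q \<in> B \<and> w \<in> C \<and> q \<noteq> w}) = int (card B) * int (card C) - int (card (B \<inter> C))"
proof -
  let ?D = "(\<lambda>q. (q,q)) ` (B \<inter> C)"
  have eq: "{(q,w). q \<in> B \<and> w \<in> C \<and> q \<noteq> w} = B \<times> C - ?D" by auto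
  have sub: "?D \<subseteq> B \<times> C" by auto
  have fin: "finite (B \<times> C)" using assms by simp
  have cD: "card ?D = card (B \<inter> C)" by (rule card_image) (auto intro: inj_onI)
  have "card (B \<inter> C) \<le> card B * card C"
    using card_mono[OF fin sub] cD assms by (simp add: card_cartesian_product)
  then show ?thesis unfolding eq
    using card_Diff_subset[OF finite_subset[OF sub fin] sub] cD assms
    by (simp add: card_cartesian_product of_nat_diff)
qed

lemma card_remove_int:
  assumes "finite B"
  shows "int (card (B - {p})) = int (card B) - (if p \<in> B then 1 else 0)"
proof (cases "p \<in> B")
  case True
  then have "card B > 0" using assms card_gt_0_iff by blast
  then show ?thesis using True by (simp add: card_Diff_singleton_if of_nat_diff)
qed simp

lemma sum_indicator_int:
  assumes "finite A"
  shows "(\<Sum>p\<in>A. (if p \<in> B then 1 else 0 :: int)) = int (card (A \<inter> B))"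
  using sum.inter_restrict[OF assms, of "\<lambda>_. 1::int" B] by simp

text \<open>Inclusion-exclusion over the three coincidences p=q, p=w, q=w; the triple
  coincidence is counted with weight 2.\<close>
lemma card_distinct_triples:
  assumes "finite A" "finite B" "finite C"
  shows "int (card (distinct_triples A B C)) =
    int (card A) * int (card B) * int (card C) - int (card (A \<inter> B)) * int (card C)
    - int (card (A \<inter> C)) * int (card B) - int (card (B \<inter> C)) * int (card A)
    + 2 * int (card (A \<inter> B \<inter> C))"
proof -
  let ?P = "\<lambda>p. {(q,w). q \<in> B - {p} \<and> w \<in> C - {p} \<and> q \<noteq> w}"
  let ?ind = "\<lambda>X p. if p \<in> X then 1 else 0 :: int"
  have eq: "distinct_triples A B C = Sigma A ?P" by (auto simp: distinct_triples_def)
  have fin: "finite (?P p)" for p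
    by (rule finite_subset[of _ "B \<times> C"]) (use assms in auto)
  have slice: "int (card (?P p)) = int (card B) * int (card C) - int (card (B \<inter> C))
      - int (card B) * ?ind C p - int (card C) * ?ind B p + 2 * ?ind (B \<inter> C) p" for p
  proof -
    have "(B - {p}) \<inter> (C - {p}) = B \<inter> C - {p}" by auto
    then show ?thesis
      using card_distinct_pairs[of "B - {p}" "C - {p}"] assms
        card_remove_int[of B p] card_remove_int[of C p] card_remove_int[of "B \<inter> C" p]
      by (auto simp: algebra_simps)
  qed
  have "int (card (Sigma A ?P)) = (\<Sum>p\<in>A. int (card (?P p)))"
    using assms fin by simp
  also have "\<dots> = (\<Sum>p\<in>A. int (card B) * int (card C) - int (card (B \<inter> C))
      - int (card B) * ?ind C p - int (card C) * ?ind B p + 2 * ?ind (B \<inter> C) p)"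
    using slice by (rule sum.cong[OF refl])
  also have "\<dots> = int (card A) * (int (card B) * int (card C) - int (card (B \<inter> C)))
      - int (card B) * int (card (A \<inter> C)) - int (card C) * int (card (A \<inter> B))
      + 2 * int (card (A \<inter> (B \<inter> C)))"
    using assms sum_indicator_int[OF assms(1), of "B \<inter> C"] by (simp add: sum.distrib sum_subtractf sum_distrib_left[symmetric]
        sum_indicator_int)
  finally show ?thesis unfolding eq by (simp add: algebra_simps Int_assoc)
qed

lemma card_diff_inj_image:
  assumes "inj_on \<phi> K" "\<phi> ` K \<subseteq> C" "S \<subseteq> K" "finite C"
  shows "int (card (C - \<phi> ` S)) = int (card C) - int (card S)"
proof -
  have sub: "\<phi> ` S \<subseteq> C" using assms by auto
  have cS: "card (\<phi> ` S) = card S" using inj_on_subset[OF assms(1,3)] card_image by blast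
  have "card S \<le> card C" using card_mono[OF assms(4) sub] cS by simp
  moreover have "card (C - \<phi> ` S) = card C - card (\<phi> ` S)"
    using card_Diff_subset[OF finite_subset[OF sub assms(4)] sub] .
  ultimately show ?thesis using cS by (simp add: of_nat_diff)
qed

text \<open>The clique indices i (clique vertex 3+i) adjacent to triangle vertex j.\<close>
definition clique_nbhd :: "nat \<Rightarrow> nat \<Rightarrow> nat \<Rightarrow> nat \<Rightarrow> nat \<Rightarrow> nat \<Rightarrow> nat \<Rightarrow> nat set" where
  "clique_nbhd a b c d e f j = {i. i < a+b+c+d+e+f \<and> j \<in> bic_nbrs a b c d e f i}"

lemma clique_nbhd_0: "clique_nbhd a b c d e f 0 = {0..<a} \<union> {a+b+c+d..<a+b+c+d+e+f}"
  by (auto simp: clique_nbhd_def bic_nbrs_def split: if_splits)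

lemma clique_nbhd_1:
  "clique_nbhd a b c d e f 1 = ({a..<a+b} \<union> {a+b+c..<a+b+c+d}) \<union> {a+b+c+d+e..<a+b+c+d+e+f}"
  by (auto simp: clique_nbhd_def bic_nbrs_def split: if_splits)

lemma clique_nbhd_2: "clique_nbhd a b c d e f 2 = {a+b..<a+b+c+d+e}"
  by (auto simp: clique_nbhd_def bic_nbrs_def split: if_splits)

lemma clique_nbhd_subset: "clique_nbhd a b c d e f j \<subseteq> {0..<a+b+c+d+e+f}"
  by (auto simp: clique_nbhd_def)

lemma card_two_intervals: "(x::nat) \<le> y \<Longrightarrow> y \<le> z \<Longrightarrow> card ({x..<y} \<union> {z..<w}) = (y - x) + (w - z)"
  by (subst card_Un_disjoint) auto

lemma card_clique_nbhds:
  fixes a b c d e f :: nat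
  defines "N \<equiv> clique_nbhd a b c d e f"
  shows "card (N 0) = a+e+f" "card (N 1) = b+d+f" "card (N 2) = c+d+e"
    and "card (N 0 \<union> N 1) = a+b+d+e+f" "card (N 0 \<union> N 2) = a+c+d+e+f"
    and "card (N 1 \<union> N 2) = b+c+d+e+f" "card (N 0 \<union> N 1 \<union> N 2) = a+b+c+d+e+f"
proof -
  have "N 0 \<union> N 1 = {0..<a+b} \<union> {a+b+c..<a+b+c+d+e+f}"
    and "N 0 \<union> N 2 = {0..<a} \<union> {a+b..<a+b+c+d+e+f}"
    and "N 1 \<union> N 2 = {a..<a+b+c+d+e+f}" and "N 0 \<union> N 1 \<union> N 2 = {0..<a+b+c+d+e+f}"
    unfolding N_def clique_nbhd_0 clique_nbhd_1 clique_nbhd_2 by auto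
  moreover have "card (N 1) = b+d+f"
    unfolding N_def clique_nbhd_1 by (subst card_Un_disjoint) (auto simp: card_two_intervals)
  ultimately show "card (N 0) = a+e+f" "card (N 1) = b+d+f" "card (N 2) = c+d+e"
    "card (N 0 \<union> N 1) = a+b+d+e+f" "card (N 0 \<union> N 2) = a+c+d+e+f"
    "card (N 1 \<union> N 2) = b+c+d+e+f" "card (N 0 \<union> N 1 \<union> N 2) = a+b+c+d+e+f"
    unfolding N_def clique_nbhd_0 clique_nbhd_2 by (simp_all add: card_two_intervals)
qed

section \<open>Proper colourings of the biclique\<close>

lemma bic_proper_iff:
  fixes a b c d e f :: nat and cc :: "nat \<Rightarrow> nat"
  defines "k \<equiv> a+b+c+d+e+f" and "N \<equiv> clique_nbhd a b c d e f"
  shows "(\<forall>x\<in>{0..<k+3}. \<forall>y\<in>{0..<k+3}. bic_adj a b c d e f x y \<longrightarrow> cc x \<noteq> cc y) \<longleftrightarrow>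
    (inj_on (\<lambda>i. cc (i+3)) {0..<k} \<and> cc 0 \<noteq> cc 1 \<and> cc 0 \<noteq> cc 2 \<and> cc 1 \<noteq> cc 2 \<and>
     (\<forall>j<3. \<forall>i\<in>N j. cc j \<noteq> cc (i+3)))"
  (is "?L \<longleftrightarrow> ?R")
proof
  assume L: ?L
  have "inj_on (\<lambda>i. cc (i+3)) {0..<k}"
  proof (rule inj_onI, rule ccontr)
    fix i i' assume "i \<in> {0..<k}" "i' \<in> {0..<k}" "cc (i+3) = cc (i'+3)" "i \<noteq> i'"
    then show False using L[rule_format, of "i+3" "i'+3"] by (auto simp: bic_adj_def)
  qed
  moreover have "cc 0 \<noteq> cc 1" "cc 0 \<noteq> cc 2" "cc 1 \<noteq> cc 2"
    using L[rule_format, of 0 1] L[rule_format, of 0 2] L[rule_format, of 1 2]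
    by (auto simp: bic_adj_def)
  moreover have "cc j \<noteq> cc (i+3)" if "j < 3" "i \<in> N j" for j i
    using that L[rule_format, of j "i+3"] by (auto simp: bic_adj_def N_def k_def clique_nbhd_def)
  ultimately show ?R by blast
next
  assume R: ?R
  show ?L
  proof (intro ballI impI)
    fix x y assume x: "x \<in> {0..<k+3}" and y: "y \<in> {0..<k+3}"
      and adj: "bic_adj a b c d e f x y"
    from adj have ne: "x \<noteq> y" by (simp add: bic_adj_def)
    from adj consider "x < 3" "y < 3" | "3 \<le> x" "3 \<le> y"
      | "x < 3" "3 \<le> y" "x \<in> bic_nbrs a b c d e f (y - 3)"
      | "y < 3" "3 \<le> x" "y \<in> bic_nbrs a b c d e f (x - 3)"
      unfolding bic_adj_def by blast
    then show "cc x \<noteq> cc y"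
    proof cases
      case 1
      then have "x = 0 \<or> x = 1 \<or> x = 2" "y = 0 \<or> y = 1 \<or> y = 2" by auto
      then show ?thesis using R ne by auto
    next
      case 2
      then have "x - 3 \<in> {0..<k}" "y - 3 \<in> {0..<k}" "x - 3 \<noteq> y - 3" using x y ne by auto
      then have "cc (x-3+3) \<noteq> cc (y-3+3)" using R inj_on_eq_iff by (metis (no_types, lifting))
      then show ?thesis using 2 by simp
    next
      case 3
      then have "y - 3 \<in> N x" using y by (auto simp: N_def k_def clique_nbhd_def)
      then have "cc x \<noteq> cc (y-3+3)" using R 3 by blast
      then show ?thesis using 3 by simp
    next
      case 4
      then have "x - 3 \<in> N y" using x by (auto simp: N_def k_def clique_nbhd_def)
      then have "cc y \<noteq> cc (x-3+3)" using R 4 by blast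
      then show ?thesis using 4 by simp
    qed
  qed
qed

fun join_colouring :: "(nat \<Rightarrow> nat) \<times> nat \<times> nat \<times> nat \<Rightarrow> nat \<Rightarrow> nat" where
  "join_colouring (\<phi>, p, q, w) x =
     (if x = 0 then p else if x = 1 then q else if x = 2 then w else \<phi> (x - 3))"

lemma join_colouring_shift [simp]: "join_colouring (\<phi>, p, q, w) (i + 3) = \<phi> i"
  by simp

lemma join_colouring_PiE:
  assumes "\<phi> \<in> {0..<k} \<rightarrow>\<^sub>E A" "p \<in> A" "q \<in> A" "w \<in> A"
  shows "join_colouring (\<phi>, p, q, w) \<in> {0..<k+3} \<rightarrow>\<^sub>E A"
  using assms by (auto simp: PiE_iff extensional_def)

lemma join_colouring_inj: "inj join_colouring"
proof (rule injI)
  fix X Y assume eq: "join_colouring X = join_colouring Y"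
  obtain \<phi> p q w \<psi> p' q' w' where X: "X = (\<phi>, p, q, w)" and Y: "Y = (\<psi>, p', q', w')"
    by (cases X, cases Y) auto
  have "\<phi> i = \<psi> i" for i using fun_cong[OF eq, of "i + 3"] by (simp add: X Y)
  moreover have "p = p'" "q = q'" "w = w'"
    using fun_cong[OF eq, of 0] fun_cong[OF eq, of 1] fun_cong[OF eq, of 2] by (simp_all add: X Y)
  ultimately show "X = Y" by (auto simp: X Y)
qed

lemma join_colouring_split:
  assumes "cc \<in> {0..<k+3} \<rightarrow>\<^sub>E A"
  shows "join_colouring (restrict (\<lambda>i. cc (i+3)) {0..<k}, cc 0, cc 1, cc 2) = cc"
proof
  fix x
  consider "x < 3" | "3 \<le> x" "x < k+3" | "k+3 \<le> x" by linarith
  then show "join_colouring (restrict (\<lambda>i. cc (i+3)) {0..<k}, cc 0, cc 1, cc 2) x = cc x"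
  proof cases
    case 1
    then show ?thesis by (auto simp: numeral_3_eq_3 less_Suc_eq)
  qed (use assms in \<open>auto simp: PiE_iff extensional_def\<close>)
qed

lemma bic_proper_join:
  fixes a b c d e f :: nat and \<phi> :: "nat \<Rightarrow> nat"
  defines "k \<equiv> a+b+c+d+e+f" and "N \<equiv> clique_nbhd a b c d e f"
  shows "(\<forall>x\<in>{0..<k+3}. \<forall>y\<in>{0..<k+3}. bic_adj a b c d e f x y \<longrightarrow>
            join_colouring (\<phi>, p, q, w) x \<noteq> join_colouring (\<phi>, p, q, w) y) \<longleftrightarrow>
    inj_on \<phi> {0..<k} \<and> (p, q, w) \<in> distinct_triples (- \<phi> ` N 0) (- \<phi> ` N 1) (- \<phi> ` N 2)"
proof -
  have "(\<forall>j<3. P j) \<longleftrightarrow> P 0 \<and> P 1 \<and> P 2" for P :: "nat \<Rightarrow> bool"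
    by (auto simp: eval_nat_numeral less_Suc_eq)
  then show ?thesis
    unfolding k_def N_def bic_proper_iff join_colouring_shift
    by (auto simp: distinct_triples_def)
qed

text \<open>The interesting factor, written as the inclusion-exclusion count of admissible
  triangle colourings: each factor x - m counts colours avoiding a set of m colours.\<close>
definition bic_cubic :: "nat \<Rightarrow> nat \<Rightarrow> nat \<Rightarrow> nat \<Rightarrow> nat \<Rightarrow> nat \<Rightarrow> real poly" where
  "bic_cubic a b c d e f =
     [:- real (a+e+f), 1:] * [:- real (b+d+f), 1:] * [:- real (c+d+e), 1:]
     - [:- real (a+b+d+e+f), 1:] * [:- real (c+d+e), 1:]
     - [:- real (a+c+d+e+f), 1:] * [:- real (b+d+f), 1:]
     - [:- real (b+c+d+e+f), 1:] * [:- real (a+e+f), 1:]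
     + smult 2 [:- real (a+b+c+d+e+f), 1:]"

definition clique_colourings :: "nat \<Rightarrow> nat \<Rightarrow> (nat \<Rightarrow> nat) set" where
  "clique_colourings k n = {\<phi> \<in> {0..<k} \<rightarrow>\<^sub>E {0..<n}. inj_on \<phi> {0..<k}}"

definition triangle_colourings ::
    "nat \<Rightarrow> nat \<Rightarrow> nat \<Rightarrow> nat \<Rightarrow> nat \<Rightarrow> nat \<Rightarrow> nat \<Rightarrow> (nat \<Rightarrow> nat) \<Rightarrow> (nat \<times> nat \<times> nat) set" where
  "triangle_colourings a b c d e f n \<phi> =
     distinct_triples ({0..<n} - \<phi> ` clique_nbhd a b c d e f 0)
       ({0..<n} - \<phi> ` clique_nbhd a b c d e f 1) ({0..<n} - \<phi> ` clique_nbhd a b c d e f 2)"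

definition bic_colourings :: "nat \<Rightarrow> nat \<Rightarrow> nat \<Rightarrow> nat \<Rightarrow> nat \<Rightarrow> nat \<Rightarrow> nat \<Rightarrow> (nat \<Rightarrow> nat) set" where
  "bic_colourings a b c d e f n = {cc \<in> bic_verts a b c d e f \<rightarrow>\<^sub>E {0..<n}.
     \<forall>x\<in>bic_verts a b c d e f. \<forall>y\<in>bic_verts a b c d e f. bic_adj a b c d e f x y \<longrightarrow> cc x \<noteq> cc y}"

lemma bic_colourings_decompose:
  fixes a b c d e f n :: nat
  defines "k \<equiv> a+b+c+d+e+f"
  shows "bic_colourings a b c d e f n =
    join_colouring ` Sigma (clique_colourings k n) (triangle_colourings a b c d e f n)"
proof -
  define N where "N = clique_nbhd a b c d e f"
  have proper: "(\<forall>x\<in>{0..<k+3}. \<forall>y\<in>{0..<k+3}. bic_adj a b c d e f x y \<longrightarrow>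
            join_colouring (\<phi>, p, q, w) x \<noteq> join_colouring (\<phi>, p, q, w) y) \<longleftrightarrow>
    inj_on \<phi> {0..<k} \<and> (p, q, w) \<in> distinct_triples (- \<phi> ` N 0) (- \<phi> ` N 1) (- \<phi> ` N 2)"
    for \<phi> p q w unfolding k_def N_def by (rule bic_proper_join)
  have triangle_iff: "(p, q, w) \<in> triangle_colourings a b c d e f n \<phi> \<longleftrightarrow>
    p < n \<and> q < n \<and> w < n \<and> (p, q, w) \<in> distinct_triples (- \<phi> ` N 0) (- \<phi> ` N 1) (- \<phi> ` N 2)"
    for \<phi> p q w by (auto simp: triangle_colourings_def distinct_triples_def N_def)
  have colourings: "bic_colourings a b c d e f n = {cc \<in> {0..<k+3} \<rightarrow>\<^sub>E {0..<n}.
    \<forall>x\<in>{0..<k+3}. \<forall>y\<in>{0..<k+3}. bic_adj a b c d e f x y \<longrightarrow> cc x \<noteq> cc y}"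
    by (simp add: bic_colourings_def bic_verts_def k_def)
  show ?thesis
  proof
    show "join_colouring ` Sigma (clique_colourings k n) (triangle_colourings a b c d e f n)
        \<subseteq> bic_colourings a b c d e f n"
    proof clarify
      fix \<phi> p q w assume \<phi>: "\<phi> \<in> clique_colourings k n"
        and pqw: "(p, q, w) \<in> triangle_colourings a b c d e f n \<phi>"
      have "join_colouring (\<phi>, p, q, w) \<in> {0..<k+3} \<rightarrow>\<^sub>E {0..<n}"
        using \<phi> pqw by (intro join_colouring_PiE) (auto simp: clique_colourings_def triangle_iff)
      moreover have "\<forall>x\<in>{0..<k+3}. \<forall>y\<in>{0..<k+3}. bic_adj a b c d e f x y \<longrightarrow>
          join_colouring (\<phi>, p, q, w) x \<noteq> join_colouring (\<phi>, p, q, w) y"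
        unfolding proper using \<phi> pqw by (auto simp: clique_colourings_def triangle_iff)
      ultimately show "join_colouring (\<phi>, p, q, w) \<in> bic_colourings a b c d e f n"
        unfolding colourings by blast
    qed
    show "bic_colourings a b c d e f n
        \<subseteq> join_colouring ` Sigma (clique_colourings k n) (triangle_colourings a b c d e f n)"
    proof
      fix cc assume cc: "cc \<in> bic_colourings a b c d e f n"
      define \<phi> where "\<phi> = restrict (\<lambda>i. cc (i+3)) {0..<k}"
      have split: "join_colouring (\<phi>, cc 0, cc 1, cc 2) = cc"
        using cc join_colouring_split by (auto simp: colourings \<phi>_def)
      have "\<forall>x\<in>{0..<k+3}. \<forall>y\<in>{0..<k+3}. bic_adj a b c d e f x y \<longrightarrow>
          join_colouring (\<phi>, cc 0, cc 1, cc 2) x \<noteq> join_colouring (\<phi>, cc 0, cc 1, cc 2) y"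
        using cc unfolding split by (simp add: colourings)
      moreover have "\<phi> \<in> {0..<k} \<rightarrow>\<^sub>E {0..<n}" "cc 0 < n" "cc 1 < n" "cc 2 < n"
        using cc by (auto simp: colourings \<phi>_def PiE_iff)
      ultimately have "\<phi> \<in> clique_colourings k n"
        "(cc 0, cc 1, cc 2) \<in> triangle_colourings a b c d e f n \<phi>"
        unfolding clique_colourings_def triangle_iff proper by auto
      then show "cc \<in> join_colouring ` Sigma (clique_colourings k n) (triangle_colourings a b c d e f n)"
        using split by force
    qed
  qed
qed

lemma card_clique_colourings: "card (clique_colourings k n) = (\<Prod>i\<in>{0..<k}. n - i)"
  using card_inj_on_subset_funcset[of "{0..<k}" "{0..<n}" "{0..<k}"]
  by (simp add: clique_colourings_def)

text \<open>For every colouring \<phi> of the clique there are g(n) admissible triangle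
  colourings: vj must avoid the |N j| colours \<phi>(N j), and inclusion-exclusion does
  the rest.\<close>
lemma card_triangle_colourings:
  fixes a b c d e f n :: nat
  defines "k \<equiv> a+b+c+d+e+f"
  assumes \<phi>: "\<phi> \<in> clique_colourings k n"
  shows "real (card (triangle_colourings a b c d e f n \<phi>)) = poly (bic_cubic a b c d e f) (real n)"
proof -
  define N where "N = clique_nbhd a b c d e f"
  have inj: "inj_on \<phi> {0..<k}" "\<phi> ` {0..<k} \<subseteq> {0..<n}"
    using \<phi> by (auto simp: clique_colourings_def)
  have avoid: "int (card ({0..<n} - \<phi> ` S)) = int n - int (card S)" if "S \<subseteq> {0..<k}" for S
    using card_diff_inj_image[OF inj that] by simp
  have union: "({0..<n} - \<phi> ` X) \<inter> ({0..<n} - \<phi> ` Y) = {0..<n} - \<phi> ` (X \<union> Y)" for X Y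
    by auto
  have sub: "N j \<subseteq> {0..<k}" for j unfolding N_def k_def by (rule clique_nbhd_subset)
  have "int (card (triangle_colourings a b c d e f n \<phi>))
    = (int n - int (a+e+f)) * (int n - int (b+d+f)) * (int n - int (c+d+e))
      - (int n - int (a+b+d+e+f)) * (int n - int (c+d+e))
      - (int n - int (a+c+d+e+f)) * (int n - int (b+d+f))
      - (int n - int (b+c+d+e+f)) * (int n - int (a+e+f))
      + 2 * (int n - int k)" (is "_ = ?count")
    using sub card_clique_nbhds[of a b c d e f]
    by (simp add: triangle_colourings_def card_distinct_triples union avoid k_def algebra_simps
        flip: N_def)
  then have "real_of_int (int (card (triangle_colourings a b c d e f n \<phi>))) = real_of_int ?count"
    by (rule arg_cong)
  then show ?thesis by (simp add: bic_cubic_def k_def algebra_simps)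
qed

text \<open>Hence P_G(n) = (n)_k * g(n): glueing is injective, so proper colourings are
  counted by summing g(n) over the (n)_k clique colourings.\<close>
lemma num_colorings_bic:
  fixes a b c d e f n :: nat
  defines "k \<equiv> a+b+c+d+e+f"
  shows "real (num_colorings (bic_verts a b c d e f) (bic_adj a b c d e f) n)
     = real (\<Prod>i\<in>{0..<k}. n - i) * poly (bic_cubic a b c d e f) (real n)"
proof -
  let ?F = "clique_colourings k n" and ?T = "triangle_colourings a b c d e f n"
  have finF: "finite ?F"
    by (rule finite_subset[of _ "{0..<k} \<rightarrow>\<^sub>E {0..<n}"]) (auto simp: clique_colourings_def finite_PiE)
  have finT: "finite (?T \<phi>)" for \<phi>
    by (rule finite_subset[of _ "{0..<n} \<times> {0..<n} \<times> {0..<n}"])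
      (auto simp: triangle_colourings_def distinct_triples_def)
  have "num_colorings (bic_verts a b c d e f) (bic_adj a b c d e f) n = card (bic_colourings a b c d e f n)"
    by (simp add: num_colorings_def bic_colourings_def)
  also have "\<dots> = card (Sigma ?F ?T)"
    unfolding bic_colourings_decompose k_def[symmetric]
    by (rule card_image[OF inj_on_subset[OF join_colouring_inj]]) simp
  finally have "real (num_colorings (bic_verts a b c d e f) (bic_adj a b c d e f) n)
      = (\<Sum>\<phi>\<in>?F. real (card (?T \<phi>)))" using finF finT by simp
  then show ?thesis
    using card_triangle_colourings card_clique_colourings k_def by simp
qed

section \<open>From colouring counts to the interesting factor\<close>

text \<open>A real polynomial is determined by its values at the natural numbers, since a
  nonzero polynomial has only finitely many roots.\<close>
lemma poly_eq_by_nat_values: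
  fixes p q :: "real poly"
  assumes "\<And>n::nat. poly p (real n) = poly q (real n)"
  shows "p = q"
proof (rule ccontr)
  assume "p \<noteq> q"
  then have "finite {x. poly (p - q) x = 0}" by (intro poly_roots_finite) simp
  moreover have "range real \<subseteq> {x. poly (p - q) x = 0}" using assms by auto
  ultimately have "finite (range (real :: nat \<Rightarrow> real))" by (rule finite_subset[rotated])
  then show False using finite_imageD[of real "UNIV :: nat set"] inj_on_def by auto
qed

lemma chrom_poly_eqI:
  assumes "\<And>n::nat. poly p (real n) = real (num_colorings V adj n)"
  shows "chrom_poly V adj = p"
  unfolding chrom_poly_def
  by (rule the_equality) (use assms poly_eq_by_nat_values in auto)

text \<open>At a natural number n the falling factorial (x)_k takes the value n(n-1)...(n-k+1),
  which is 0 when k > n (truncated subtraction produces the factor n - n = 0 then).\<close>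
lemma poly_falling_poly: "poly (falling_poly k) (real n) = real (\<Prod>i\<in>{0..<k}. n - i)"
proof -
  have "poly (falling_poly k) (real n) = (\<Prod>i\<in>{0..<k}. real n - real i)"
    by (simp add: falling_poly_def poly_prod atLeast0LessThan)
  also have "\<dots> = (\<Prod>i\<in>{0..<k}. real (n - i))"
  proof (cases "k \<le> n")
    case True
    then show ?thesis by (auto simp: of_nat_diff intro!: prod.cong)
  next
    case False
    then have n: "n \<in> {0..<k}" by simp
    have "(\<Prod>i\<in>{0..<k}. real n - real i) = 0" by (rule prod_zero) (use n in auto)
    moreover have "(\<Prod>i\<in>{0..<k}. real (n - i)) = 0" by (rule prod_zero) (use n in auto)
    ultimately show ?thesis by (simp only:)
  qed
  finally show ?thesis by simp
qed

lemma falling_poly_nonzero: "falling_poly k \<noteq> 0"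
  unfolding falling_poly_def by (auto simp: prod_zero_iff)

lemma interesting_factor_eq_bic_cubic:
  "interesting_factor a b c d e f = bic_cubic a b c d e f"
proof -
  have "chrom_poly (bic_verts a b c d e f) (bic_adj a b c d e f)
      = falling_poly (a+b+c+d+e+f) * bic_cubic a b c d e f"
    by (rule chrom_poly_eqI) (simp add: num_colorings_bic poly_falling_poly)
  then show ?thesis
    unfolding interesting_factor_def using falling_poly_nonzero by simp
qed

text \<open>With g and h explicit cubics, the claim is a polynomial identity in x once v is
  eliminated via u + v = 4t - 2r + 4 and r + s - 1 is read over the reals.\<close>
theorem mainTheorem8:
  fixes r s t u v :: nat
  assumes "r + s \<ge> 1"
    and "int u + int v = 4 * int t - 2 * int r + 4"
  shows "\<forall>x::real.
    poly (interesting_factor r (r + s - 1) t t (s + t) u) x =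
    - poly (interesting_factor r (r + s - 1) t t (s + t) v)
           (- x + 2 * real s + 6 * real t + 4)"
proof
  fix x :: real
  have v: "real v = 4 * real t - 2 * real r + 4 - real u"
    using arg_cong[OF assms(2), of real_of_int] by simp
  define m where "m = r + s - 1"
  have m: "real m = real r + real s - 1"
    using assms(1) by (simp add: m_def of_nat_diff)
  show "poly (interesting_factor r (r + s - 1) t t (s + t) u) x =
    - poly (interesting_factor r (r + s - 1) t t (s + t) v) (- x + 2 * real s + 6 * real t + 4)"
    unfolding interesting_factor_eq_bic_cubic bic_cubic_def m_def[symmetric]
    by (simp add: v m algebra_simps)
qed

end
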